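(* Let $p\ge0$ be an integer and let $u$ be a differentiable Gaussian random field of order $p$ on $\Gamma$. Let $S\subset\Gamma$ be an open set whose boundary consists of finitely many points. Then for each $s\in\partial S$ and each edge $e\in\mathcal E_s$, we have $u_e(s),u_e'(s),\dots,u_e^{(p)}(s)\in H_+(\partial S)$.
   Context: $\Gamma$ is a compact connected metric graph (finite sets of vertices and edges, each edge $e$ identified with $[0,\ell_e]$, points $s=(t,e)$, geodesic metric $d$). $S_\varepsilon=\{s:\exists z\in S,d(s,z)<\varepsilon\}$. For $s\in\Gamma$, $\mathcal E_s$ is the set of edges incident to $s$ (if $s$ is interior to an edge $e$, $\mathcal E_s=\{e\}$); $u_e(s)$ means $u_e(t)$ where $u_e$ is $u$ restricted to $e$ as a function of $t\in[0,\ell_e]$ and $s$ corresponds to $t$ on $e$. For a Gaussian random field $u$ and $S\subset\Gamma$: $H(S)$ is the closure in $L_2(\Omega)$ of $\mathrm{span}\{u(s):s\in S\}$, and $H_+(S)=\bigcap_{\varepsilon>0}H(S_\varepsilon)$. Weak $L_2(\Omega)$ derivatives: a map $v:[0,\ell_e]\to H(\Gamma)$ is weakly differentiable at $t$ if there is $v'(t)\in H(\Gamma)$ with $\mathbb E[w(v(t_n)-v(t))/(t_n-t)]\to\mathbb E[wv'(t)]$ for every $w\in H(\Gamma)$ and every sequence $t_n\to t$, $t_n\in[0,\ell_e]\setminus\{t\}$; higher-order weak derivatives are defined inductively ($v$ has a $k$-th weak derivative at $t$ if $v^{(k-1)}$ exists on all of $[0,\ell_e]$ and is weakly differentiable at $t$).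 $v$ is weakly continuous if $t\mapsto\mathbb E[wv(t)]$ is continuous for every $w\in H(\Gamma)$. A Gaussian random field $u$ is a differentiable GRF of order $p\ge1$ if for every edge $e$ the weak derivatives $u_e^{(j)}(t)$, $j=1,\dots,p$, exist for all $t\in[0,\ell_e]$ and $u_e^{(j)}$, $j=0,\dots,p$, are weakly continuous; it is a differentiable GRF of order $0$ if it is continuous in $L_2(\Omega)$. *)

theory Defs
  imports "HOL-Probability.Probability"
begin

text \<open>Points of the graph are represented canonically: a vertex v is Inl v, a point
interior to edge e at parameter 0 < t < len e is Inr (e, t).\<close>

type_synonym ('v, 'e) gpoint = "'v + ('e \<times> real)"

definition gpt :: "('e \<Rightarrow> 'v) \<Rightarrow> ('e \<Rightarrow> 'v) \<Rightarrow> ('e \<Rightarrow> real) \<Rightarrow> 'e \<Rightarrow> real \<Rightarrow> ('v, 'e) gpoint" where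
  "gpt src tgt len e t =
     (if t = 0 then Inl (src e) else if t = len e then Inl (tgt e) else Inr (e, t))"

definition gpoints :: "'v set \<Rightarrow> 'e set \<Rightarrow> ('e \<Rightarrow> 'v) \<Rightarrow> ('e \<Rightarrow> 'v) \<Rightarrow> ('e \<Rightarrow> real) \<Rightarrow> ('v, 'e) gpoint set" where
  "gpoints V E src tgt len = Inl ` V \<union> {gpt src tgt len e t | e t. e \<in> E \<and> t \<in> {0..len e}}"

inductive greach :: "'e set \<Rightarrow> ('e \<Rightarrow> 'v) \<Rightarrow> ('e \<Rightarrow> 'v) \<Rightarrow> ('e \<Rightarrow> real) \<Rightarrow> ('v, 'e) gpoint \<Rightarrow> ('v, 'e) gpoint \<Rightarrow> real \<Rightarrow> bool"
  for E src tgt len where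
  refl: "greach E src tgt len x x 0"
| step: "e \<in> E \<Longrightarrow> a \<in> {0..len e} \<Longrightarrow> b \<in> {0..len e} \<Longrightarrow>
         greach E src tgt len (gpt src tgt len e b) y c \<Longrightarrow>
         greach E src tgt len (gpt src tgt len e a) y (\<bar>a - b\<bar> + c)"

definition gdist :: "'e set \<Rightarrow> ('e \<Rightarrow> 'v) \<Rightarrow> ('e \<Rightarrow> 'v) \<Rightarrow> ('e \<Rightarrow> real) \<Rightarrow> ('v, 'e) gpoint \<Rightarrow> ('v, 'e) gpoint \<Rightarrow> real" where
  "gdist E src tgt len x y = Inf {c. greach E src tgt len x y c}"

definition compact_connected_metric_graph :: "'v set \<Rightarrow> 'e set \<Rightarrow> ('e \<Rightarrow> 'v) \<Rightarrow> ('e \<Rightarrow> 'v) \<Rightarrow> ('e \<Rightarrow> real) \<Rightarrow> bool" where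
  "compact_connected_metric_graph V E src tgt len \<longleftrightarrow>
     finite V \<and> finite E \<and> V \<noteq> {} \<and>
     (\<forall>e\<in>E. src e \<in> V \<and> tgt e \<in> V \<and> 0 < len e) \<and>
     (\<forall>x\<in>gpoints V E src tgt len. \<forall>y\<in>gpoints V E src tgt len. \<exists>c. greach E src tgt len x y c)"

definition incident_edges :: "'e set \<Rightarrow> ('e \<Rightarrow> 'v) \<Rightarrow> ('e \<Rightarrow> 'v) \<Rightarrow> ('v, 'e) gpoint \<Rightarrow> 'e set" where
  "incident_edges E src tgt s =
     (case s of Inl v \<Rightarrow> {e \<in> E. src e = v \<or> tgt e = v} | Inr (e, t) \<Rightarrow> {e})"

definition gnbhd :: "'v set \<Rightarrow> 'e set \<Rightarrow> ('e \<Rightarrow> 'v) \<Rightarrow> ('e \<Rightarrow> 'v) \<Rightarrow> ('e \<Rightarrow> real) \<Rightarrow> ('v, 'e) gpoint set \<Rightarrow> real \<Rightarrow> ('v, 'e) gpoint set" where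
  "gnbhd V E src tgt len S \<epsilon> =
     {s \<in> gpoints V E src tgt len. \<exists>z\<in>S. gdist E src tgt len s z < \<epsilon>}"

definition gopen :: "'v set \<Rightarrow> 'e set \<Rightarrow> ('e \<Rightarrow> 'v) \<Rightarrow> ('e \<Rightarrow> 'v) \<Rightarrow> ('e \<Rightarrow> real) \<Rightarrow> ('v, 'e) gpoint set \<Rightarrow> bool" where
  "gopen V E src tgt len S \<longleftrightarrow> S \<subseteq> gpoints V E src tgt len \<and>
     (\<forall>s\<in>S. \<exists>\<epsilon>>0. \<forall>z\<in>gpoints V E src tgt len. gdist E src tgt len s z < \<epsilon> \<longrightarrow> z \<in> S)"

definition gclosure :: "'v set \<Rightarrow> 'e set \<Rightarrow> ('e \<Rightarrow> 'v) \<Rightarrow> ('e \<Rightarrow> 'v) \<Rightarrow> ('e \<Rightarrow> real) \<Rightarrow> ('v, 'e) gpoint set \<Rightarrow> ('v, 'e) gpoint set" where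
  "gclosure V E src tgt len S =
     {s \<in> gpoints V E src tgt len. \<forall>\<epsilon>>0. \<exists>z\<in>S. gdist E src tgt len s z < \<epsilon>}"

definition gboundary :: "'v set \<Rightarrow> 'e set \<Rightarrow> ('e \<Rightarrow> 'v) \<Rightarrow> ('e \<Rightarrow> 'v) \<Rightarrow> ('e \<Rightarrow> real) \<Rightarrow> ('v, 'e) gpoint set \<Rightarrow> ('v, 'e) gpoint set" where
  "gboundary V E src tgt len S =
     gclosure V E src tgt len S \<inter> gclosure V E src tgt len (gpoints V E src tgt len - S)"

definition gaussian_rv :: "'w measure \<Rightarrow> ('w \<Rightarrow> real) \<Rightarrow> bool" where
  "gaussian_rv M X \<longleftrightarrow> X \<in> borel_measurable M \<and>
     ((\<exists>\<mu>. AE \<omega> in M. X \<omega> = \<mu>) \<or>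
      (\<exists>\<mu> \<sigma>. 0 < \<sigma> \<and> distributed M lborel X (\<lambda>x. ennreal (normal_density \<mu> \<sigma> x))))"

definition lin_span_field :: "('p \<Rightarrow> 'w \<Rightarrow> real) \<Rightarrow> 'p set \<Rightarrow> ('w \<Rightarrow> real) set" where
  "lin_span_field u S =
     {Y. \<exists>(n::nat) (c::nat \<Rightarrow> real) z. (\<forall>i<n. z i \<in> S) \<and> Y = (\<lambda>\<omega>. \<Sum>i<n. c i * u (z i) \<omega>)}"

definition gaussian_random_field :: "'w measure \<Rightarrow> 'p set \<Rightarrow> ('p \<Rightarrow> 'w \<Rightarrow> real) \<Rightarrow> bool" where
  "gaussian_random_field M P u \<longleftrightarrow> prob_space M \<and>
     (\<forall>Y\<in>lin_span_field u P. gaussian_rv M Y)"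

definition L2_rv :: "'w measure \<Rightarrow> ('w \<Rightarrow> real) \<Rightarrow> bool" where
  "L2_rv M X \<longleftrightarrow> X \<in> borel_measurable M \<and> integrable M (\<lambda>\<omega>. (X \<omega>)\<^sup>2)"

definition Hspace :: "'w measure \<Rightarrow> ('p \<Rightarrow> 'w \<Rightarrow> real) \<Rightarrow> 'p set \<Rightarrow> ('w \<Rightarrow> real) set" where
  "Hspace M u S =
     {X. L2_rv M X \<and> (\<exists>Y. (\<forall>n. Y n \<in> lin_span_field u S) \<and>
          (\<lambda>n. integral\<^sup>L M (\<lambda>\<omega>. (X \<omega> - Y n \<omega>)\<^sup>2)) \<longlonglongrightarrow> 0)}"

definition Hplus :: "'w measure \<Rightarrow> 'v set \<Rightarrow> 'e set \<Rightarrow> ('e \<Rightarrow> 'v) \<Rightarrow> ('e \<Rightarrow> 'v) \<Rightarrow> ('e \<Rightarrow> real)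
    \<Rightarrow> (('v, 'e) gpoint \<Rightarrow> 'w \<Rightarrow> real) \<Rightarrow> ('v, 'e) gpoint set \<Rightarrow> ('w \<Rightarrow> real) set" where
  "Hplus M V E src tgt len u S = (\<Inter>\<epsilon>\<in>{0<..}. Hspace M u (gnbhd V E src tgt len S \<epsilon>))"

definition weak_deriv_at :: "'w measure \<Rightarrow> ('w \<Rightarrow> real) set \<Rightarrow> real \<Rightarrow> (real \<Rightarrow> 'w \<Rightarrow> real) \<Rightarrow> ('w \<Rightarrow> real) \<Rightarrow> real \<Rightarrow> bool" where
  "weak_deriv_at M H l v D t \<longleftrightarrow> D \<in> H \<and>
     (\<forall>w\<in>H. \<forall>tn. (\<forall>n. tn n \<in> {0..l} - {t}) \<and> tn \<longlonglongrightarrow> t \<longrightarrow>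
        (\<lambda>n. integral\<^sup>L M (\<lambda>\<omega>. w \<omega> * ((v (tn n) \<omega> - v t \<omega>) / (tn n - t))))
          \<longlonglongrightarrow> integral\<^sup>L M (\<lambda>\<omega>. w \<omega> * D \<omega>))"

definition weakly_continuous :: "'w measure \<Rightarrow> ('w \<Rightarrow> real) set \<Rightarrow> real \<Rightarrow> (real \<Rightarrow> 'w \<Rightarrow> real) \<Rightarrow> bool" where
  "weakly_continuous M H l v \<longleftrightarrow>
     (\<forall>w\<in>H. continuous_on {0..l} (\<lambda>t. integral\<^sup>L M (\<lambda>\<omega>. w \<omega> * v t \<omega>)))"

definition weak_deriv_family :: "'w measure \<Rightarrow> 'v set \<Rightarrow> 'e set \<Rightarrow> ('e \<Rightarrow> 'v) \<Rightarrow> ('e \<Rightarrow> 'v) \<Rightarrow> ('e \<Rightarrow> real)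
    \<Rightarrow> (('v, 'e) gpoint \<Rightarrow> 'w \<Rightarrow> real) \<Rightarrow> nat \<Rightarrow> 'e \<Rightarrow> (nat \<Rightarrow> real \<Rightarrow> 'w \<Rightarrow> real) \<Rightarrow> bool" where
  "weak_deriv_family M V E src tgt len u p e D \<longleftrightarrow>
     (\<forall>t\<in>{0..len e}. D 0 t = u (gpt src tgt len e t)) \<and>
     (\<forall>j<p. \<forall>t\<in>{0..len e}.
        weak_deriv_at M (Hspace M u (gpoints V E src tgt len)) (len e) (D j) (D (Suc j) t) t)"

definition differentiable_GRF :: "'w measure \<Rightarrow> 'v set \<Rightarrow> 'e set \<Rightarrow> ('e \<Rightarrow> 'v) \<Rightarrow> ('e \<Rightarrow> 'v) \<Rightarrow> ('e \<Rightarrow> real)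
    \<Rightarrow> (('v, 'e) gpoint \<Rightarrow> 'w \<Rightarrow> real) \<Rightarrow> nat \<Rightarrow> bool" where
  "differentiable_GRF M V E src tgt len u p \<longleftrightarrow>
     gaussian_random_field M (gpoints V E src tgt len) u \<and>
     (if p = 0 then
        (\<forall>s\<in>gpoints V E src tgt len. \<forall>\<epsilon>>0. \<exists>\<delta>>0. \<forall>z\<in>gpoints V E src tgt len.
           gdist E src tgt len s z < \<delta> \<longrightarrow>
           integral\<^sup>L M (\<lambda>\<omega>. (u z \<omega> - u s \<omega>)\<^sup>2) < \<epsilon>)
      else
        (\<forall>e\<in>E. \<exists>D. weak_deriv_family M V E src tgt len u p e D \<and>
           (\<forall>j\<le>p. weakly_continuous M (Hspace M u (gpoints V E src tgt len)) (len e) (D j))))"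

end

theory Submission
  imports Defs
begin

text \<open>Since the point s at parameter t on e lies in the boundary, it suffices to show that
  D j t lies in H(B(s, \<epsilon>)) for every \<epsilon> > 0. This is trivial for j = 0 and passes from j to j + 1: for |\<tau> - t| < \<epsilon>/2 the
  ball B(gpt e \<tau>, \<epsilon>/2) lies inside B(s, \<epsilon>), so by induction the difference quotients of D j at t
  lie in H(B(s, \<epsilon>)), and they converge weakly to D (j + 1) t. A closed subspace of L2 is weakly
  closed, as one sees by testing against the residual of the orthogonal projection onto it;
  constructing that projection uses the completeness of L2.\<close>

section \<open>Square-integrable random variables\<close>

lemma L2_rv_integrable_mult:
  assumes "L2_rv M f" "L2_rv M g"
  shows "integrable M (\<lambda>x. f x * g x)"
proof (rule Bochner_Integration.integrable_bound)
  show "integrable M (\<lambda>x. (f x)\<^sup>2 + (g x)\<^sup>2)" using assms by (simp add: L2_rv_def)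
  have [measurable]: "f \<in> borel_measurable M" "g \<in> borel_measurable M"
    using assms by (auto simp: L2_rv_def)
  show "(\<lambda>x. f x * g x) \<in> borel_measurable M" by measurable
  have "\<bar>f x\<bar> * \<bar>g x\<bar> \<le> (f x)\<^sup>2 + (g x)\<^sup>2" for x
    using sum_squares_bound[of "\<bar>f x\<bar>" "\<bar>g x\<bar>"] mult_nonneg_nonneg[of "\<bar>f x\<bar>" "\<bar>g x\<bar>"]
    unfolding power2_abs by linarith
  then show "AE x in M. norm (f x * g x) \<le> norm ((f x)\<^sup>2 + (g x)\<^sup>2)"
    by (simp add: abs_mult)
qed

lemma L2_rv_lincomb:
  assumes "L2_rv M f" "L2_rv M g"
  shows "L2_rv M (\<lambda>x. a * f x + b * g x)"
proof -
  have [measurable]: "f \<in> borel_measurable M" "g \<in> borel_measurable M"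
    using assms by (auto simp: L2_rv_def)
  have "(\<lambda>x. (a * f x + b * g x)\<^sup>2) = (\<lambda>x. a\<^sup>2 * (f x)\<^sup>2 + b\<^sup>2 * (g x)\<^sup>2 + (2*a*b) * (f x * g x))"
    by (simp add: fun_eq_iff power2_eq_square algebra_simps)
  moreover have "integrable M (\<lambda>x. a\<^sup>2 * (f x)\<^sup>2 + b\<^sup>2 * (g x)\<^sup>2 + (2*a*b) * (f x * g x))"
    using assms L2_rv_integrable_mult[OF assms] by (simp add: L2_rv_def)
  ultimately show ?thesis by (simp add: L2_rv_def)
qed

lemma L2_rv_diff: "L2_rv M f \<Longrightarrow> L2_rv M g \<Longrightarrow> L2_rv M (\<lambda>x. f x - g x)"
  using L2_rv_lincomb[of M f g 1 "-1"] by simp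

lemma L2_rv_const: "finite_measure M \<Longrightarrow> L2_rv M (\<lambda>x. c)"
  by (simp add: L2_rv_def finite_measure.integrable_const)

lemma L2_rv_integrable: "finite_measure M \<Longrightarrow> L2_rv M f \<Longrightarrow> integrable M f"
  by (simp add: L2_rv_def finite_measure.square_integrable_imp_integrable)

lemma integral_square_lincomb:
  assumes "L2_rv M f" "L2_rv M g"
  shows "integral\<^sup>L M (\<lambda>x. (a * f x + b * g x)\<^sup>2) =
     a\<^sup>2 * integral\<^sup>L M (\<lambda>x. (f x)\<^sup>2) + b\<^sup>2 * integral\<^sup>L M (\<lambda>x. (g x)\<^sup>2)
     + 2*a*b * integral\<^sup>L M (\<lambda>x. f x * g x)"
proof -
  have "integral\<^sup>L M (\<lambda>x. (a * f x + b * g x)\<^sup>2) =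
        integral\<^sup>L M (\<lambda>x. a\<^sup>2 * (f x)\<^sup>2 + b\<^sup>2 * (g x)\<^sup>2 + (2*a*b) * (f x * g x))"
    by (rule Bochner_Integration.integral_cong) (simp_all add: power2_eq_square algebra_simps)
  also have "\<dots> = a\<^sup>2 * integral\<^sup>L M (\<lambda>x. (f x)\<^sup>2) + b\<^sup>2 * integral\<^sup>L M (\<lambda>x. (g x)\<^sup>2)
     + 2*a*b * integral\<^sup>L M (\<lambda>x. f x * g x)"
    using assms L2_rv_integrable_mult[OF assms] by (simp add: L2_rv_def)
  finally show ?thesis .
qed

lemma integral_square_lincomb_le:
  assumes "L2_rv M f" "L2_rv M g"
  shows "integral\<^sup>L M (\<lambda>x. (a * f x + b * g x)\<^sup>2) \<le>
     2 * a\<^sup>2 * integral\<^sup>L M (\<lambda>x. (f x)\<^sup>2) + 2 * b\<^sup>2 * integral\<^sup>L M (\<lambda>x. (g x)\<^sup>2)"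
proof -
  have "(a * f x + b * g x)\<^sup>2 \<le> 2 * a\<^sup>2 * (f x)\<^sup>2 + 2 * b\<^sup>2 * (g x)\<^sup>2" for x
    using zero_le_power2[of "a * f x - b * g x"]
    by (simp add: power2_eq_square algebra_simps)
  then have "integral\<^sup>L M (\<lambda>x. (a * f x + b * g x)\<^sup>2) \<le>
             integral\<^sup>L M (\<lambda>x. 2 * a\<^sup>2 * (f x)\<^sup>2 + 2 * b\<^sup>2 * (g x)\<^sup>2)"
    using assms L2_rv_lincomb[OF assms, of a b] by (intro integral_mono) (auto simp: L2_rv_def)
  also have "\<dots> = 2 * a\<^sup>2 * integral\<^sup>L M (\<lambda>x. (f x)\<^sup>2) + 2 * b\<^sup>2 * integral\<^sup>L M (\<lambda>x. (g x)\<^sup>2)"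
    using assms by (simp add: L2_rv_def)
  finally show ?thesis .
qed

lemma quadratic_nonneg_imp_discriminant_le:
  fixes a b c :: real
  assumes "\<And>t. 0 \<le> a * t\<^sup>2 - 2 * b * t + c" "0 \<le> a"
  shows "b\<^sup>2 \<le> a * c"
proof (cases "a = 0")
  case True
  have "0 \<le> c" using assms(1)[of 0] by simp
  have "b = 0"
  proof (rule ccontr)
    assume b: "b \<noteq> 0"
    have "0 \<le> - 2 * b * ((c+1)/(2*b)) + c" using assms(1)[of "(c+1)/(2*b)"] True by simp
    also have "- 2 * b * ((c+1)/(2*b)) = -(c+1)" using b by (simp add: field_simps)
    finally show False by simp
  qed
  then show ?thesis using True \<open>0 \<le> c\<close> by simp
next
  case False
  then have a: "0 < a" using assms(2) by simp
  have "0 \<le> a * (b/a)\<^sup>2 - 2 * b * (b/a) + c" by (rule assms(1))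
  also have "\<dots> = c - b\<^sup>2 / a" using a by (simp add: power2_eq_square field_simps)
  finally show ?thesis using a by (simp add: field_simps)
qed

lemma L2_Cauchy_Schwarz:
  assumes "L2_rv M f" "L2_rv M g"
  shows "(integral\<^sup>L M (\<lambda>x. f x * g x))\<^sup>2 \<le> integral\<^sup>L M (\<lambda>x. (g x)\<^sup>2) * integral\<^sup>L M (\<lambda>x. (f x)\<^sup>2)"
proof (rule quadratic_nonneg_imp_discriminant_le)
  fix t
  have "0 \<le> integral\<^sup>L M (\<lambda>x. (1 * f x + (-t) * g x)\<^sup>2)" by simp
  then show "0 \<le> integral\<^sup>L M (\<lambda>x. (g x)\<^sup>2) * t\<^sup>2 - 2 * integral\<^sup>L M (\<lambda>x. f x * g x) * t
                 + integral\<^sup>L M (\<lambda>x. (f x)\<^sup>2)"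
    by (subst (asm) integral_square_lincomb[OF assms]) (simp add: algebra_simps)
qed simp

lemma integral_mult_eq_0_of_minimal:
  assumes r: "L2_rv M r" and k: "L2_rv M k"
    and min: "\<And>t. integral\<^sup>L M (\<lambda>x. (r x)\<^sup>2) \<le> integral\<^sup>L M (\<lambda>x. (r x - t * k x)\<^sup>2)"
  shows "integral\<^sup>L M (\<lambda>x. r x * k x) = 0"
proof -
  have "0 \<le> integral\<^sup>L M (\<lambda>x. (k x)\<^sup>2) * t\<^sup>2 - 2 * integral\<^sup>L M (\<lambda>x. r x * k x) * t + 0" for t
    using min[of t] integral_square_lincomb[OF r k, of 1 "-t"] by (simp add: algebra_simps)
  from quadratic_nonneg_imp_discriminant_le[OF this] show ?thesis by simp
qed

lemma integral_mult_tendsto_0: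
  assumes w: "L2_rv M w" and f: "\<And>n. L2_rv M (f n)"
    and lim: "(\<lambda>n. integral\<^sup>L M (\<lambda>x. (f n x)\<^sup>2)) \<longlonglongrightarrow> 0"
  shows "(\<lambda>n. integral\<^sup>L M (\<lambda>x. w x * f n x)) \<longlonglongrightarrow> 0"
proof (rule Lim_null_comparison)
  let ?b = "\<lambda>n. sqrt (integral\<^sup>L M (\<lambda>x. (f n x)\<^sup>2) * integral\<^sup>L M (\<lambda>x. (w x)\<^sup>2))"
  show "\<forall>\<^sub>F n in sequentially. norm (integral\<^sup>L M (\<lambda>x. w x * f n x)) \<le> ?b n"
    using L2_Cauchy_Schwarz[OF w f] by (simp add: real_le_rsqrt)
  show "?b \<longlonglongrightarrow> 0"
    using tendsto_real_sqrt[OF tendsto_mult[OF lim tendsto_const]] by simp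
qed

lemma integral_square_tendsto:
  assumes f: "L2_rv M f" and fn: "\<And>n. L2_rv M (fn n)"
    and lim: "(\<lambda>n. integral\<^sup>L M (\<lambda>x. (fn n x - f x)\<^sup>2)) \<longlonglongrightarrow> 0"
  shows "(\<lambda>n. integral\<^sup>L M (\<lambda>x. (fn n x)\<^sup>2)) \<longlonglongrightarrow> integral\<^sup>L M (\<lambda>x. (f x)\<^sup>2)"
proof -
  have d: "L2_rv M (\<lambda>x. fn n x - f x)" for n by (rule L2_rv_diff[OF fn f])
  have "integral\<^sup>L M (\<lambda>x. (fn n x)\<^sup>2) = integral\<^sup>L M (\<lambda>x. (f x)\<^sup>2)
      + integral\<^sup>L M (\<lambda>x. (fn n x - f x)\<^sup>2) + 2 * integral\<^sup>L M (\<lambda>x. f x * (fn n x - f x))" for n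
    using integral_square_lincomb[OF f d[of n], of 1 1] by simp
  moreover have "(\<lambda>n. integral\<^sup>L M (\<lambda>x. (f x)\<^sup>2) + integral\<^sup>L M (\<lambda>x. (fn n x - f x)\<^sup>2)
      + 2 * integral\<^sup>L M (\<lambda>x. f x * (fn n x - f x))) \<longlonglongrightarrow> integral\<^sup>L M (\<lambda>x. (f x)\<^sup>2) + 0 + 2 * 0"
    by (intro tendsto_intros lim integral_mult_tendsto_0[OF f d lim])
  ultimately show ?thesis by simp
qed

lemma (in prob_space) integral_abs_square_le:
  assumes "L2_rv M f"
  shows "(integral\<^sup>L M (\<lambda>x. \<bar>f x\<bar>))\<^sup>2 \<le> integral\<^sup>L M (\<lambda>x. (f x)\<^sup>2)"
proof -
  have [measurable]: "f \<in> borel_measurable M" using assms by (simp add: L2_rv_def)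
  have "L2_rv M (\<lambda>x. \<bar>f x\<bar>)" using assms by (simp add: L2_rv_def)
  from L2_Cauchy_Schwarz[OF this L2_rv_const[OF finite_measure_axioms, of 1]] show ?thesis
    by (simp add: prob_space)
qed

lemma AE_convergent_of_summable_increments:
  fixes f :: "nat \<Rightarrow> 'a \<Rightarrow> real"
  assumes [measurable]: "\<And>n. f n \<in> borel_measurable M"
    and int: "\<And>k. integrable M (\<lambda>x. f (Suc k) x - f k x)"
    and sum: "summable (\<lambda>k. integral\<^sup>L M (\<lambda>x. \<bar>f (Suc k) x - f k x\<bar>))"
  shows "AE x in M. convergent (\<lambda>n. f n x)"
proof -
  define h where "h k x = \<bar>f (Suc k) x - f k x\<bar>" for k x
  have [measurable]: "h k \<in> borel_measurable M" for k unfolding h_def by measurable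
  have "(\<integral>\<^sup>+ x. (\<Sum>k. ennreal (h k x)) \<partial>M) = (\<Sum>k. \<integral>\<^sup>+ x. ennreal (h k x) \<partial>M)"
    by (rule nn_integral_suminf) measurable
  also have "\<dots> = (\<Sum>k. ennreal (integral\<^sup>L M (h k)))"
    using int by (intro suminf_cong nn_integral_eq_integral) (auto simp: h_def)
  also have "\<dots> \<noteq> top"
    unfolding h_def by (rule ennreal_suminf_neq_top[OF sum]) simp
  finally have "(\<integral>\<^sup>+ x. (\<Sum>k. ennreal (h k x)) \<partial>M) \<noteq> \<infinity>" by simp
  then have "AE x in M. (\<Sum>k. ennreal (h k x)) \<noteq> \<infinity>"
    by (rule nn_integral_noteq_infinite[rotated]) measurable
  then show ?thesis
  proof (rule AE_mp, intro AE_I2 impI)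
    fix x assume "(\<Sum>k. ennreal (h k x)) \<noteq> \<infinity>"
    then have "summable (\<lambda>k. h k x)" by (intro summable_suminf_not_top) (simp_all add: h_def)
    then have "summable (\<lambda>k. f (Suc k) x - f k x)" unfolding h_def by (rule summable_rabs_cancel)
    then have "convergent (\<lambda>n. f 0 x + (\<Sum>k<n. f (Suc k) x - f k x))"
      by (intro convergent_add convergent_const) (simp add: summable_iff_convergent)
    then show "convergent (\<lambda>n. f n x)" using sum_lessThan_telescope[of "\<lambda>k. f k x"] by simp
  qed
qed

lemma (in prob_space) L2_complete:
  assumes L: "\<And>n. L2_rv M (f n)"
    and C: "\<And>m n. m \<le> n \<Longrightarrow> integral\<^sup>L M (\<lambda>x. (f m x - f n x)\<^sup>2) \<le> 4 * (1/4)^m"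
  obtains g where "L2_rv M g" "(\<lambda>n. integral\<^sup>L M (\<lambda>x. (f n x - g x)\<^sup>2)) \<longlonglongrightarrow> 0"
proof -
  have [measurable]: "f n \<in> borel_measurable M" for n using L by (simp add: L2_rv_def)
  have incr: "integral\<^sup>L M (\<lambda>x. \<bar>f (Suc k) x - f k x\<bar>) \<le> 2 * (1/2)^k" for k
  proof (rule power2_le_imp_le)
    have "(integral\<^sup>L M (\<lambda>x. \<bar>f (Suc k) x - f k x\<bar>))\<^sup>2 \<le> integral\<^sup>L M (\<lambda>x. (f (Suc k) x - f k x)\<^sup>2)"
      by (rule integral_abs_square_le[OF L2_rv_diff[OF L L]])
    also have "\<dots> \<le> 4 * (1/4)^k"
      using C[of k "Suc k"] by (simp add: power2_commute)
    also have "\<dots> = (2 * (1/2)^k)\<^sup>2"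
      by (simp add: power2_eq_square power_mult_distrib[symmetric])
    finally show "(integral\<^sup>L M (\<lambda>x. \<bar>f (Suc k) x - f k x\<bar>))\<^sup>2 \<le> (2 * (1/2)^k)\<^sup>2" .
  qed simp
  have "AE x in M. convergent (\<lambda>n. f n x)"
  proof (rule AE_convergent_of_summable_increments)
    show "integrable M (\<lambda>x. f (Suc k) x - f k x)" for k
      by (rule L2_rv_integrable[OF finite_measure_axioms L2_rv_diff[OF L L]])
    have "summable (\<lambda>k. 2 * (1/2::real)^k)" by (intro summable_mult summable_geometric) simp
    then show "summable (\<lambda>k. integral\<^sup>L M (\<lambda>x. \<bar>f (Suc k) x - f k x\<bar>))"
      by (rule summable_comparison_test') (use incr in simp)
  qed measurable
  then have conv: "AE x in M. (\<lambda>n. f n x) \<longlonglongrightarrow> lim (\<lambda>n. f n x)"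
    by (simp add: convergent_LIMSEQ_iff)
  define g where "g x = lim (\<lambda>n. f n x)" for x
  have [measurable]: "g \<in> borel_measurable M" unfolding g_def by measurable
  have fatou: "(\<integral>\<^sup>+ x. ennreal ((f n x - g x)\<^sup>2) \<partial>M) \<le> ennreal (4 * (1/4)^n)" for n
  proof -
    have "(\<integral>\<^sup>+ x. ennreal ((f n x - g x)\<^sup>2) \<partial>M) =
          (\<integral>\<^sup>+ x. liminf (\<lambda>k. ennreal ((f n x - f k x)\<^sup>2)) \<partial>M)"
      using conv
    proof (intro nn_integral_cong_AE, rule AE_mp, intro AE_I2 impI)
      fix x assume "(\<lambda>k. f k x) \<longlonglongrightarrow> lim (\<lambda>k. f k x)"
      then have "(\<lambda>k. ennreal ((f n x - f k x)\<^sup>2)) \<longlonglongrightarrow> ennreal ((f n x - g x)\<^sup>2)"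
        unfolding g_def by (intro tendsto_intros) auto
      from lim_imp_Liminf[OF _ this]
      show "ennreal ((f n x - g x)\<^sup>2) = liminf (\<lambda>k. ennreal ((f n x - f k x)\<^sup>2))" by simp
    qed
    also have "\<dots> \<le> liminf (\<lambda>k. \<integral>\<^sup>+ x. ennreal ((f n x - f k x)\<^sup>2) \<partial>M)"
      by (rule nn_integral_liminf) measurable
    also have "\<dots> \<le> liminf (\<lambda>k. ennreal (4 * (1/4)^n))"
    proof (rule Liminf_mono, rule eventually_sequentiallyI[of n])
      fix k assume "n \<le> k"
      have "integrable M (\<lambda>x. (f n x - f k x)\<^sup>2)" using L2_rv_diff[OF L L] by (simp add: L2_rv_def)
      then have "(\<integral>\<^sup>+ x. ennreal ((f n x - f k x)\<^sup>2) \<partial>M) = ennreal (integral\<^sup>L M (\<lambda>x. (f n x - f k x)\<^sup>2))"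
        by (rule nn_integral_eq_integral) simp
      also have "\<dots> \<le> ennreal (4 * (1/4)^n)" using C[OF \<open>n \<le> k\<close>] by (rule ennreal_leI)
      finally show "(\<integral>\<^sup>+ x. ennreal ((f n x - f k x)\<^sup>2) \<partial>M) \<le> ennreal (4 * (1/4)^n)" .
    qed
    finally show ?thesis by (simp add: Liminf_const)
  qed
  have int: "integrable M (\<lambda>x. (f n x - g x)\<^sup>2)" for n
  proof -
    have "(\<integral>\<^sup>+ x. ennreal (norm ((f n x - g x)\<^sup>2)) \<partial>M) < \<infinity>"
      using fatou[of n] by (simp add: le_less_trans[OF _ ennreal_less_top])
    then show ?thesis by (simp add: integrable_iff_bounded)
  qed
  have bound: "integral\<^sup>L M (\<lambda>x. (f n x - g x)\<^sup>2) \<le> 4 * (1/4)^n" for n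
  proof -
    have "integral\<^sup>L M (\<lambda>x. (f n x - g x)\<^sup>2) = enn2real (\<integral>\<^sup>+ x. ennreal ((f n x - g x)\<^sup>2) \<partial>M)"
      by (rule integral_eq_nn_integral) auto
    also have "\<dots> \<le> 4 * (1/4)^n"
      using enn2real_mono[OF fatou] by simp
    finally show ?thesis .
  qed
  have "L2_rv M (\<lambda>x. f 0 x - g x)" using int[of 0] by (simp add: L2_rv_def)
  from L2_rv_diff[OF L[of 0] this] have "L2_rv M g" by simp
  moreover have "(\<lambda>n. integral\<^sup>L M (\<lambda>x. (f n x - g x)\<^sup>2)) \<longlonglongrightarrow> 0"
  proof (rule tendsto_sandwich[OF _ _ tendsto_const])
    show "(\<lambda>n. 4 * (1/4::real)^n) \<longlonglongrightarrow> 0"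
      by (intro tendsto_mult_right_zero LIMSEQ_power_zero) simp
    show "\<forall>\<^sub>F n in sequentially. 0 \<le> integral\<^sup>L M (\<lambda>x. (f n x - g x)\<^sup>2)" by simp
    show "\<forall>\<^sub>F n in sequentially. integral\<^sup>L M (\<lambda>x. (f n x - g x)\<^sup>2) \<le> 4 * (1/4)^n"
      using bound by simp
  qed
  ultimately show ?thesis by (rule that)
qed

section \<open>The Gaussian spaces H(S) and orthogonal projection\<close>

lemma lin_span_field_lincomb:
  assumes "Y1 \<in> lin_span_field u S" "Y2 \<in> lin_span_field u S"
  shows "(\<lambda>\<omega>. a * Y1 \<omega> + b * Y2 \<omega>) \<in> lin_span_field u S"
proof -
  obtain n1 :: nat and c1 z1 where 1: "\<forall>i<n1. z1 i \<in> S" "Y1 = (\<lambda>\<omega>. \<Sum>i<n1. c1 i * u (z1 i) \<omega>)"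
    using assms(1) unfolding lin_span_field_def by blast
  obtain n2 :: nat and c2 z2 where 2: "\<forall>i<n2. z2 i \<in> S" "Y2 = (\<lambda>\<omega>. \<Sum>i<n2. c2 i * u (z2 i) \<omega>)"
    using assms(2) unfolding lin_span_field_def by blast
  define c where "c i = (if i < n1 then a * c1 i else b * c2 (i - n1))" for i
  define z where "z i = (if i < n1 then z1 i else z2 (i - n1))" for i
  have "(\<Sum>i<n1+n2. c i * u (z i) \<omega>) = a * Y1 \<omega> + b * Y2 \<omega>" for \<omega>
  proof -
    have "(\<Sum>i<n1+n2. c i * u (z i) \<omega>) = (\<Sum>i<n1. c i * u (z i) \<omega>) + (\<Sum>i<n2. c (n1+i) * u (z (n1+i)) \<omega>)"
      by (induct n2) (simp_all add: add.assoc)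
    also have "\<dots> = a * Y1 \<omega> + b * Y2 \<omega>"
      by (simp add: 1 2 sum_distrib_left c_def z_def mult.assoc)
    finally show ?thesis .
  qed
  moreover have "\<forall>i<n1+n2. z i \<in> S" using 1 2 by (auto simp: z_def)
  ultimately show ?thesis
    unfolding lin_span_field_def
    by (intro CollectI exI[of _ "n1+n2"] exI[of _ c] exI[of _ z]) (simp add: fun_eq_iff)
qed

lemma lin_span_field_mono: "S \<subseteq> T \<Longrightarrow> lin_span_field u S \<subseteq> lin_span_field u T"
  unfolding lin_span_field_def by blast

lemma lin_span_field_single: "z \<in> S \<Longrightarrow> u z \<in> lin_span_field u S"
  unfolding lin_span_field_def by (auto intro!: exI[of _ 1] exI[of _ "\<lambda>_. 1"] exI[of _ "\<lambda>_. z"])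

lemma lin_span_field_L2:
  assumes U: "\<forall>z\<in>S. L2_rv M (u z)" and Y: "Y \<in> lin_span_field u S"
  shows "L2_rv M Y"
proof -
  obtain n :: nat and c z where z: "\<forall>i<n. z i \<in> S" and Y: "Y = (\<lambda>\<omega>. \<Sum>i<n. c i * u (z i) \<omega>)"
    using Y unfolding lin_span_field_def by blast
  have "L2_rv M (\<lambda>\<omega>. \<Sum>i<m. c i * u (z i) \<omega>)" if "m \<le> n" for m
    using that
  proof (induct m)
    case 0
    then show ?case by (simp add: L2_rv_def)
  next
    case (Suc m)
    then have "L2_rv M (\<lambda>\<omega>. 1 * (\<Sum>i<m. c i * u (z i) \<omega>) + c m * u (z m) \<omega>)"
      using z U by (intro L2_rv_lincomb) auto
    then show ?case by simp
  qed
  then show ?thesis using Y by simp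
qed

lemma Hspace_mono: "S \<subseteq> T \<Longrightarrow> Hspace M u S \<subseteq> Hspace M u T"
  unfolding Hspace_def using lin_span_field_mono by blast

lemma Hspace_single: "z \<in> S \<Longrightarrow> L2_rv M (u z) \<Longrightarrow> u z \<in> Hspace M u S"
  unfolding Hspace_def using lin_span_field_single[of z S u] by (auto intro!: exI[of _ "\<lambda>_. u z"])

lemma Hspace_lincomb:
  assumes U: "\<forall>z\<in>S. L2_rv M (u z)" and X: "X \<in> Hspace M u S" and Y: "Y \<in> Hspace M u S"
  shows "(\<lambda>\<omega>. a * X \<omega> + b * Y \<omega>) \<in> Hspace M u S"
proof -
  obtain X' where X': "\<And>n. X' n \<in> lin_span_field u S"
    "(\<lambda>n. integral\<^sup>L M (\<lambda>\<omega>. (X \<omega> - X' n \<omega>)\<^sup>2)) \<longlonglongrightarrow> 0"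
    using X by (auto simp: Hspace_def)
  obtain Y' where Y': "\<And>n. Y' n \<in> lin_span_field u S"
    "(\<lambda>n. integral\<^sup>L M (\<lambda>\<omega>. (Y \<omega> - Y' n \<omega>)\<^sup>2)) \<longlonglongrightarrow> 0"
    using Y by (auto simp: Hspace_def)
  have LX: "L2_rv M X" and LY: "L2_rv M Y" using X Y by (auto simp: Hspace_def)
  have LX': "L2_rv M (X' n)" and LY': "L2_rv M (Y' n)" for n
    using X'(1) Y'(1) lin_span_field_L2[OF U] by auto
  let ?err = "\<lambda>n. integral\<^sup>L M (\<lambda>\<omega>. ((a * X \<omega> + b * Y \<omega>) - (a * X' n \<omega> + b * Y' n \<omega>))\<^sup>2)"
  have bound: "?err n \<le> 2 * a\<^sup>2 * integral\<^sup>L M (\<lambda>\<omega>. (X \<omega> - X' n \<omega>)\<^sup>2)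
                 + 2 * b\<^sup>2 * integral\<^sup>L M (\<lambda>\<omega>. (Y \<omega> - Y' n \<omega>)\<^sup>2)" for n
    using integral_square_lincomb_le[OF L2_rv_diff[OF LX LX'[of n]] L2_rv_diff[OF LY LY'[of n]], of a b]
    by (simp add: algebra_simps)
  have "?err \<longlonglongrightarrow> 0"
  proof (rule tendsto_sandwich[OF _ _ tendsto_const])
    show "(\<lambda>n. 2 * a\<^sup>2 * integral\<^sup>L M (\<lambda>\<omega>. (X \<omega> - X' n \<omega>)\<^sup>2)
                 + 2 * b\<^sup>2 * integral\<^sup>L M (\<lambda>\<omega>. (Y \<omega> - Y' n \<omega>)\<^sup>2)) \<longlonglongrightarrow> 0"
      using tendsto_add[OF tendsto_mult_right_zero[OF X'(2)] tendsto_mult_right_zero[OF Y'(2)]] by simp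
  qed (use bound in auto)
  moreover have "(\<lambda>\<omega>. a * X' n \<omega> + b * Y' n \<omega>) \<in> lin_span_field u S" for n
    using X'(1) Y'(1) by (rule lin_span_field_lincomb)
  ultimately show ?thesis
    unfolding Hspace_def mem_Collect_eq using L2_rv_lincomb[OF LX LY]
    by (intro conjI exI[of _ "\<lambda>n \<omega>. a * X' n \<omega> + b * Y' n \<omega>"]) auto
qed

lemma Hspace_distance_ge:
  assumes U: "\<forall>z\<in>S. L2_rv M (u z)" and D: "L2_rv M D" and y: "y \<in> Hspace M u S"
    and ge: "\<And>y'. y' \<in> lin_span_field u S \<Longrightarrow> c \<le> integral\<^sup>L M (\<lambda>\<omega>. (D \<omega> - y' \<omega>)\<^sup>2)"
  shows "c \<le> integral\<^sup>L M (\<lambda>\<omega>. (D \<omega> - y \<omega>)\<^sup>2)"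
proof -
  obtain Y where Y: "\<And>n. Y n \<in> lin_span_field u S"
    and lim: "(\<lambda>n. integral\<^sup>L M (\<lambda>\<omega>. (y \<omega> - Y n \<omega>)\<^sup>2)) \<longlonglongrightarrow> 0"
    using y by (auto simp: Hspace_def)
  have Ly: "L2_rv M y" using y by (simp add: Hspace_def)
  have LY: "L2_rv M (Y n)" for n using lin_span_field_L2[OF U Y] .
  have "(\<lambda>n. integral\<^sup>L M (\<lambda>\<omega>. ((D \<omega> - Y n \<omega>) - (D \<omega> - y \<omega>))\<^sup>2)) \<longlonglongrightarrow> 0"
    using lim by (simp add: power2_commute)
  from integral_square_tendsto[OF L2_rv_diff[OF D Ly] L2_rv_diff[OF D LY] this]
  have "(\<lambda>n. integral\<^sup>L M (\<lambda>\<omega>. (D \<omega> - Y n \<omega>)\<^sup>2)) \<longlonglongrightarrow> integral\<^sup>L M (\<lambda>\<omega>. (D \<omega> - y \<omega>)\<^sup>2)" .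
  then show ?thesis by (rule LIMSEQ_le_const) (use ge Y in auto)
qed

lemma integral_square_parallelogram:
  assumes D: "L2_rv M D" and f: "L2_rv M f" and g: "L2_rv M g"
  shows "integral\<^sup>L M (\<lambda>\<omega>. (f \<omega> - g \<omega>)\<^sup>2) =
           2 * integral\<^sup>L M (\<lambda>\<omega>. (D \<omega> - f \<omega>)\<^sup>2) + 2 * integral\<^sup>L M (\<lambda>\<omega>. (D \<omega> - g \<omega>)\<^sup>2)
         - 4 * integral\<^sup>L M (\<lambda>\<omega>. (D \<omega> - (1/2 * f \<omega> + 1/2 * g \<omega>))\<^sup>2)"
proof -
  have "integrable M (\<lambda>\<omega>. (D \<omega> - f \<omega>)\<^sup>2)" "integrable M (\<lambda>\<omega>. (D \<omega> - g \<omega>)\<^sup>2)"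
    "integrable M (\<lambda>\<omega>. (D \<omega> - (1/2 * f \<omega> + 1/2 * g \<omega>))\<^sup>2)"
    using L2_rv_diff[OF D f] L2_rv_diff[OF D g] L2_rv_diff[OF D L2_rv_lincomb[OF f g, of "1/2" "1/2"]]
    by (simp_all add: L2_rv_def)
  moreover have "(\<lambda>\<omega>. (f \<omega> - g \<omega>)\<^sup>2) = (\<lambda>\<omega>. 2 * (D \<omega> - f \<omega>)\<^sup>2 + 2 * (D \<omega> - g \<omega>)\<^sup>2
                   - 4 * (D \<omega> - (1/2 * f \<omega> + 1/2 * g \<omega>))\<^sup>2)"
    by (simp add: fun_eq_iff power2_eq_square algebra_simps)
  ultimately show ?thesis by simp
qed

lemma (in prob_space) Hspace_best_approximation:
  assumes U: "\<forall>z\<in>S. L2_rv M (u z)" and D: "L2_rv M D"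
  obtains g where "g \<in> Hspace M u S"
    "\<And>y. y \<in> Hspace M u S \<Longrightarrow> integral\<^sup>L M (\<lambda>\<omega>. (D \<omega> - g \<omega>)\<^sup>2) \<le> integral\<^sup>L M (\<lambda>\<omega>. (D \<omega> - y \<omega>)\<^sup>2)"
proof -
  define J where "J y = integral\<^sup>L M (\<lambda>\<omega>. (D \<omega> - y \<omega>)\<^sup>2)" for y
  define d where "d = Inf (J ` lin_span_field u S)"
  have d_le: "d \<le> J y" if "y \<in> lin_span_field u S" for y
    unfolding d_def using that by (intro cInf_lower bdd_belowI[of _ 0]) (auto simp: J_def)
  have "(\<lambda>\<omega>. 0) \<in> lin_span_field u S"
    unfolding lin_span_field_def by (intro CollectI exI[of _ "0::nat"]) simp
  then have "\<exists>y\<in>lin_span_field u S. J y < d + (1/4)^n" for n :: nat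
    using cInf_lessD[of "J ` lin_span_field u S" "d + (1/4)^n"] unfolding d_def by auto
  then obtain y where yS: "\<And>n. y n \<in> lin_span_field u S" and yJ: "\<And>n. J (y n) < d + (1/4)^n"
    by metis
  have Ly: "L2_rv M (y n)" for n by (rule lin_span_field_L2[OF U yS])
  have cauchy: "integral\<^sup>L M (\<lambda>\<omega>. (y m \<omega> - y n \<omega>)\<^sup>2) \<le> 4 * (1/4)^m" if "m \<le> n" for m n
  proof -
    have mid: "(\<lambda>\<omega>. 1/2 * y m \<omega> + 1/2 * y n \<omega>) \<in> lin_span_field u S"
      by (rule lin_span_field_lincomb[OF yS yS])
    have "(1/4::real)^n \<le> (1/4)^m" using that by (intro power_decreasing) auto
    with yJ[of m] yJ[of n] d_le[OF mid]
    show ?thesis unfolding integral_square_parallelogram[OF D Ly Ly] J_def by linarith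
  qed
  obtain g where Lg: "L2_rv M g" and lim: "(\<lambda>n. integral\<^sup>L M (\<lambda>\<omega>. (y n \<omega> - g \<omega>)\<^sup>2)) \<longlonglongrightarrow> 0"
    by (rule L2_complete[OF Ly cauchy])
  have "g \<in> Hspace M u S"
    unfolding Hspace_def using Lg yS lim by (auto simp: power2_commute)
  moreover have "J g \<le> d"
  proof (rule LIMSEQ_le)
    have "(\<lambda>n. integral\<^sup>L M (\<lambda>\<omega>. ((D \<omega> - y n \<omega>) - (D \<omega> - g \<omega>))\<^sup>2)) \<longlonglongrightarrow> 0"
      using lim by (simp add: power2_commute)
    from integral_square_tendsto[OF L2_rv_diff[OF D Lg] L2_rv_diff[OF D Ly] this]
    show "(\<lambda>n. J (y n)) \<longlonglongrightarrow> J g" by (simp add: J_def)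
    show "(\<lambda>n. d + (1/4::real)^n) \<longlonglongrightarrow> d"
      using tendsto_add[OF tendsto_const LIMSEQ_power_zero[of "1/4::real"]] by simp
    show "\<exists>N. \<forall>n\<ge>N. J (y n) \<le> d + (1/4)^n" using yJ less_imp_le by blast
  qed
  moreover have "d \<le> J y'" if "y' \<in> Hspace M u S" for y'
    unfolding J_def by (rule Hspace_distance_ge[OF U D that d_le[unfolded J_def]])
  ultimately show ?thesis by (intro that) (auto simp: J_def intro: order_trans)
qed

lemma (in prob_space) Hspace_projection:
  assumes U: "\<forall>z\<in>S. L2_rv M (u z)" and D: "L2_rv M D"
  obtains g where "g \<in> Hspace M u S"
    "\<And>k. k \<in> Hspace M u S \<Longrightarrow> integral\<^sup>L M (\<lambda>\<omega>. (D \<omega> - g \<omega>) * k \<omega>) = 0"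
proof -
  obtain g where g: "g \<in> Hspace M u S" and best:
    "\<And>y. y \<in> Hspace M u S \<Longrightarrow> integral\<^sup>L M (\<lambda>\<omega>. (D \<omega> - g \<omega>)\<^sup>2) \<le> integral\<^sup>L M (\<lambda>\<omega>. (D \<omega> - y \<omega>)\<^sup>2)"
    using Hspace_best_approximation[OF U D] by blast
  have "integral\<^sup>L M (\<lambda>\<omega>. (D \<omega> - g \<omega>) * k \<omega>) = 0" if k: "k \<in> Hspace M u S" for k
  proof (rule integral_mult_eq_0_of_minimal)
    show "L2_rv M (\<lambda>\<omega>. D \<omega> - g \<omega>)" "L2_rv M k"
      using D g k by (auto simp: Hspace_def intro: L2_rv_diff)
    fix t
    have "(\<lambda>\<omega>. 1 * g \<omega> + t * k \<omega>) \<in> Hspace M u S" by (rule Hspace_lincomb[OF U g k])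
    from best[OF this]
    show "integral\<^sup>L M (\<lambda>\<omega>. (D \<omega> - g \<omega>)\<^sup>2) \<le> integral\<^sup>L M (\<lambda>\<omega>. (D \<omega> - g \<omega> - t * k \<omega>)\<^sup>2)"
      by (simp add: algebra_simps)
  qed
  with g show ?thesis by (rule that)
qed

lemma Hspace_of_integral_square_diff_eq_0:
  assumes U: "\<forall>z\<in>S. L2_rv M (u z)" and D: "L2_rv M D" and g: "g \<in> Hspace M u S"
    and null: "integral\<^sup>L M (\<lambda>\<omega>. (D \<omega> - g \<omega>)\<^sup>2) = 0"
  shows "D \<in> Hspace M u S"
proof -
  obtain Y where Y: "\<And>n. Y n \<in> lin_span_field u S"
    and lim: "(\<lambda>n. integral\<^sup>L M (\<lambda>\<omega>. (g \<omega> - Y n \<omega>)\<^sup>2)) \<longlonglongrightarrow> 0"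
    using g by (auto simp: Hspace_def)
  have Lg: "L2_rv M g" using g by (simp add: Hspace_def)
  have bound: "integral\<^sup>L M (\<lambda>\<omega>. (D \<omega> - Y n \<omega>)\<^sup>2) \<le> 2 * integral\<^sup>L M (\<lambda>\<omega>. (g \<omega> - Y n \<omega>)\<^sup>2)" for n
    using integral_square_lincomb_le[OF L2_rv_diff[OF D Lg] L2_rv_diff[OF Lg lin_span_field_L2[OF U Y]], of 1 1 n]
    by (simp add: null)
  have "(\<lambda>n. integral\<^sup>L M (\<lambda>\<omega>. (D \<omega> - Y n \<omega>)\<^sup>2)) \<longlonglongrightarrow> 0"
  proof (rule tendsto_sandwich[OF _ _ tendsto_const])
    show "(\<lambda>n. 2 * integral\<^sup>L M (\<lambda>\<omega>. (g \<omega> - Y n \<omega>)\<^sup>2)) \<longlonglongrightarrow> 0"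
      using tendsto_mult_right_zero[OF lim] by simp
  qed (use bound in auto)
  with D Y show ?thesis unfolding Hspace_def by blast
qed

lemma (in prob_space) Hspace_weakly_closed:
  assumes U: "\<forall>z\<in>G. L2_rv M (u z)" and AG: "A \<subseteq> G" and DG: "D \<in> Hspace M u G"
    and q: "eventually (\<lambda>n. q n \<in> Hspace M u A) sequentially"
    and weak: "\<And>w. w \<in> Hspace M u G \<Longrightarrow>
                 (\<lambda>n. integral\<^sup>L M (\<lambda>\<omega>. w \<omega> * q n \<omega>)) \<longlonglongrightarrow> integral\<^sup>L M (\<lambda>\<omega>. w \<omega> * D \<omega>)"
  shows "D \<in> Hspace M u A"
proof -
  have UA: "\<forall>z\<in>A. L2_rv M (u z)" using U AG by auto
  have LD: "L2_rv M D" using DG by (simp add: Hspace_def)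
  obtain g where gA: "g \<in> Hspace M u A"
    and orth: "\<And>k. k \<in> Hspace M u A \<Longrightarrow> integral\<^sup>L M (\<lambda>\<omega>. (D \<omega> - g \<omega>) * k \<omega>) = 0"
    using Hspace_projection[OF UA LD] by blast
  define r where "r = (\<lambda>\<omega>. D \<omega> - g \<omega>)"
  have Lg: "L2_rv M g" using gA by (simp add: Hspace_def)
  have Lr: "L2_rv M r" unfolding r_def by (rule L2_rv_diff[OF LD Lg])
  have "g \<in> Hspace M u G" using Hspace_mono[OF AG] gA by blast
  from Hspace_lincomb[OF U DG this, of 1 "-1"] have "r \<in> Hspace M u G" by (simp add: r_def)
  then have "(\<lambda>n. integral\<^sup>L M (\<lambda>\<omega>. r \<omega> * q n \<omega>)) \<longlonglongrightarrow> integral\<^sup>L M (\<lambda>\<omega>. r \<omega> * D \<omega>)"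
    by (rule weak)
  moreover have "eventually (\<lambda>n. integral\<^sup>L M (\<lambda>\<omega>. r \<omega> * q n \<omega>) = 0) sequentially"
    using q by (rule eventually_mono) (simp add: orth r_def)
  ultimately have "(\<lambda>n. 0::real) \<longlonglongrightarrow> integral\<^sup>L M (\<lambda>\<omega>. r \<omega> * D \<omega>)"
    by (rule Lim_transform_eventually)
  then have rD: "integral\<^sup>L M (\<lambda>\<omega>. r \<omega> * D \<omega>) = 0" by (rule LIMSEQ_unique[OF tendsto_const, symmetric])
  have "integral\<^sup>L M (\<lambda>\<omega>. r \<omega> * D \<omega>) = integral\<^sup>L M (\<lambda>\<omega>. (r \<omega>)\<^sup>2 + r \<omega> * g \<omega>)"
    by (rule Bochner_Integration.integral_cong) (simp_all add: r_def power2_eq_square algebra_simps)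
  also have "\<dots> = integral\<^sup>L M (\<lambda>\<omega>. (r \<omega>)\<^sup>2) + integral\<^sup>L M (\<lambda>\<omega>. r \<omega> * g \<omega>)"
    using Lr L2_rv_integrable_mult[OF Lr Lg] by (simp add: L2_rv_def)
  also have "integral\<^sup>L M (\<lambda>\<omega>. r \<omega> * g \<omega>) = 0" unfolding r_def by (rule orth[OF gA])
  finally have "integral\<^sup>L M (\<lambda>\<omega>. (D \<omega> - g \<omega>)\<^sup>2) = 0" using rD by (simp add: r_def)
  then show ?thesis by (rule Hspace_of_integral_square_diff_eq_0[OF UA LD gA])
qed

section \<open>Gaussian fields and neighbourhoods in the metric graph\<close>

lemma (in prob_space) gaussian_rv_L2:
  assumes "gaussian_rv M X"
  shows "L2_rv M X"
proof -
  have [measurable]: "X \<in> borel_measurable M" using assms by (simp add: gaussian_rv_def)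
  from assms consider (degenerate) \<mu> where "AE \<omega> in M. X \<omega> = \<mu>"
    | (normal) \<mu> \<sigma> where "0 < \<sigma>" "distributed M lborel X (\<lambda>x. ennreal (normal_density \<mu> \<sigma> x))"
    unfolding gaussian_rv_def by blast
  then have "integrable M (\<lambda>\<omega>. (X \<omega>)\<^sup>2)"
  proof cases
    case degenerate
    then have "AE \<omega> in M. (X \<omega>)\<^sup>2 = \<mu>\<^sup>2" by (auto elim: AE_mp)
    then show ?thesis by (subst integrable_cong_AE[where g = "\<lambda>_. \<mu>\<^sup>2"]) auto
  next
    case normal
    \<comment> \<open>the second moment of a normal law, from its central moments of order 0, 1, 2\<close>
    have "(\<lambda>x. normal_density \<mu> \<sigma> x * x\<^sup>2) = (\<lambda>x. normal_density \<mu> \<sigma> x * (x - \<mu>)^2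
            + (2*\<mu>) * (normal_density \<mu> \<sigma> x * (x - \<mu>)^1) + \<mu>\<^sup>2 * (normal_density \<mu> \<sigma> x * (x - \<mu>)^0))"
      by (simp add: fun_eq_iff power2_eq_square algebra_simps)
    then have "integrable lborel (\<lambda>x. normal_density \<mu> \<sigma> x * x\<^sup>2)"
      by (simp only:) (intro Bochner_Integration.integrable_add Bochner_Integration.integrable_mult_right
                        integrable_normal_moment[OF \<open>0 < \<sigma>\<close>])
    then show ?thesis using distributed_integrable[OF normal(2), of "\<lambda>x. x\<^sup>2"] by simp
  qed
  then show ?thesis by (simp add: L2_rv_def)
qed

lemma gaussian_random_field_L2:
  assumes "gaussian_random_field M P u" "z \<in> P"
  shows "L2_rv M (u z)"
proof -
  interpret prob_space M using assms(1) by (simp add: gaussian_random_field_def)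
  show ?thesis
    using assms lin_span_field_single[of z P u] by (auto simp: gaussian_random_field_def intro: gaussian_rv_L2)
qed

lemma greach_nonneg: "greach E src tgt len x y c \<Longrightarrow> 0 \<le> c"
  by (induct rule: greach.induct) auto

lemma greach_trans:
  assumes "greach E src tgt len x y c1" "greach E src tgt len y z c2"
  shows "greach E src tgt len x z (c1 + c2)"
  using assms
proof (induct rule: greach.induct)
  case (refl x)
  then show ?case by simp
next
  case (step e a b y c)
  then have "greach E src tgt len (gpt src tgt len e b) z (c + c2)" by simp
  from greach.step[OF step(1,2,3) this] show ?case by (simp add: add.assoc)
qed

lemma gdist_le_greach: "greach E src tgt len x y c \<Longrightarrow> gdist E src tgt len x y \<le> c"
  unfolding gdist_def by (rule cInf_lower) (auto intro: bdd_belowI[of _ 0] greach_nonneg)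

lemma greach_lt_of_gdist_lt:
  assumes "greach E src tgt len x y c0" "gdist E src tgt len x y < \<epsilon>"
  obtains c where "greach E src tgt len x y c" "c < \<epsilon>"
  using cInf_lessD[of "{c. greach E src tgt len x y c}" \<epsilon>] assms unfolding gdist_def by blast

lemma gpt_in_gpoints: "e \<in> E \<Longrightarrow> t \<in> {0..len e} \<Longrightarrow> gpt src tgt len e t \<in> gpoints V E src tgt len"
  unfolding gpoints_def by blast

lemma incident_edges_subset:
  assumes "s \<in> gpoints V E src tgt len"
  shows "incident_edges E src tgt s \<subseteq> E"
proof (cases s)
  case (Inl v)
  then show ?thesis by (auto simp: incident_edges_def)
next
  case (Inr q)
  then obtain e t where "s = Inr (e, t)" by (cases q) auto
  with assms show ?thesis by (auto simp: incident_edges_def gpoints_def gpt_def split: if_splits)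
qed

lemma gnbhd_mono: "S \<subseteq> T \<Longrightarrow> gnbhd V E src tgt len S \<epsilon> \<subseteq> gnbhd V E src tgt len T \<epsilon>"
  unfolding gnbhd_def by blast

lemma self_in_gnbhd:
  assumes "x \<in> gpoints V E src tgt len" "0 < \<epsilon>"
  shows "x \<in> gnbhd V E src tgt len {x} \<epsilon>"
  using assms gdist_le_greach[OF greach.refl, of E src tgt len x] unfolding gnbhd_def by force

lemma gnbhd_gpt_subset:
  assumes G: "compact_connected_metric_graph V E src tgt len"
    and e: "e \<in> E" and t: "t \<in> {0..len e}" and \<tau>: "\<tau> \<in> {0..len e}" and d: "\<bar>\<tau> - t\<bar> + \<delta> \<le> \<epsilon>"
  shows "gnbhd V E src tgt len {gpt src tgt len e \<tau>} \<delta> \<subseteq> gnbhd V E src tgt len {gpt src tgt len e t} \<epsilon>"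
proof
  fix z assume "z \<in> gnbhd V E src tgt len {gpt src tgt len e \<tau>} \<delta>"
  then have z: "z \<in> gpoints V E src tgt len" and zd: "gdist E src tgt len z (gpt src tgt len e \<tau>) < \<delta>"
    unfolding gnbhd_def by auto
  from G z gpt_in_gpoints[where V=V and src=src and tgt=tgt and len=len, OF e \<tau>] obtain c0 where "greach E src tgt len z (gpt src tgt len e \<tau>) c0"
    unfolding compact_connected_metric_graph_def by blast
  then obtain c where c: "greach E src tgt len z (gpt src tgt len e \<tau>) c" "c < \<delta>"
    using zd by (rule greach_lt_of_gdist_lt)
  have "greach E src tgt len (gpt src tgt len e \<tau>) (gpt src tgt len e t) (\<bar>\<tau> - t\<bar> + 0)"
    using e \<tau> t by (intro greach.step greach.refl)
  from gdist_le_greach[OF greach_trans[OF c(1) this]] c(2) d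
  have "gdist E src tgt len z (gpt src tgt len e t) < \<epsilon>" by linarith
  with z show "z \<in> gnbhd V E src tgt len {gpt src tgt len e t} \<epsilon>" unfolding gnbhd_def by blast
qed

section \<open>Weak derivatives stay in the local Gaussian spaces\<close>

lemma (in prob_space) weak_deriv_at_in_Hspace:
  assumes U: "\<forall>z\<in>G. L2_rv M (u z)" and AG: "A \<subseteq> G"
    and wd: "weak_deriv_at M (Hspace M u G) l v D t"
    and l: "0 < l" and t: "t \<in> {0..l}" and \<delta>: "0 < \<delta>"
    and near: "\<And>\<tau>. \<tau> \<in> {0..l} \<Longrightarrow> \<bar>\<tau> - t\<bar> < \<delta> \<Longrightarrow> v \<tau> \<in> Hspace M u A"
  shows "D \<in> Hspace M u A"
proof -
  have UA: "\<forall>z\<in>A. L2_rv M (u z)" using U AG by blast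
  obtain tn where tn: "\<And>n. tn n \<in> {0..l} - {t}" and lim: "tn \<longlonglongrightarrow> t"
    using islimpt_sequential[of t "{0..l}"] l t by auto
  define q where "q n = (\<lambda>\<omega>. (v (tn n) \<omega> - v t \<omega>) / (tn n - t))" for n
  have "eventually (\<lambda>n. \<bar>tn n - t\<bar> < \<delta>) sequentially"
    using lim \<delta> unfolding tendsto_iff dist_real_def by blast
  then have q: "eventually (\<lambda>n. q n \<in> Hspace M u A) sequentially"
  proof (rule eventually_mono)
    fix n assume "\<bar>tn n - t\<bar> < \<delta>"
    then have "v (tn n) \<in> Hspace M u A" "v t \<in> Hspace M u A"
      using near tn t \<delta> by auto
    from Hspace_lincomb[OF UA this, of "1 / (tn n - t)" "- 1 / (tn n - t)"]
    show "q n \<in> Hspace M u A" by (simp add: q_def diff_divide_distrib)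
  qed
  have DG: "D \<in> Hspace M u G"
    and weak: "\<And>w. w \<in> Hspace M u G \<Longrightarrow>
           (\<lambda>n. integral\<^sup>L M (\<lambda>\<omega>. w \<omega> * q n \<omega>)) \<longlonglongrightarrow> integral\<^sup>L M (\<lambda>\<omega>. w \<omega> * D \<omega>)"
    using wd tn lim unfolding weak_deriv_at_def q_def by blast+
  show ?thesis by (rule Hspace_weakly_closed[OF U AG DG q weak])
qed

lemma (in prob_space) weak_deriv_family_in_Hspace_gnbhd:
  assumes G: "compact_connected_metric_graph V E src tgt len"
    and U: "\<forall>z\<in>gpoints V E src tgt len. L2_rv M (u z)" and e: "e \<in> E"
    and D: "weak_deriv_family M V E src tgt len u p e D" and "j \<le> p"
    and t: "t \<in> {0..len e}" and \<epsilon>: "0 < \<epsilon>"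
  shows "D j t \<in> Hspace M u (gnbhd V E src tgt len {gpt src tgt len e t} \<epsilon>)"
  using \<open>j \<le> p\<close> t \<epsilon>
proof (induction j arbitrary: t \<epsilon>)
  case 0
  have "gpt src tgt len e t \<in> gpoints V E src tgt len" using e \<open>t \<in> {0..len e}\<close> by (rule gpt_in_gpoints)
  with D 0 U show ?case
    by (auto simp: weak_deriv_family_def intro: Hspace_single self_in_gnbhd)
next
  case (Suc j)
  have "0 < len e" using G e by (simp add: compact_connected_metric_graph_def)
  have wd: "weak_deriv_at M (Hspace M u (gpoints V E src tgt len)) (len e) (D j) (D (Suc j) t) t"
    using D Suc.prems by (simp add: weak_deriv_family_def)
  have sub: "gnbhd V E src tgt len {gpt src tgt len e t} \<epsilon> \<subseteq> gpoints V E src tgt len"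
    unfolding gnbhd_def by blast
  have near: "D j \<tau> \<in> Hspace M u (gnbhd V E src tgt len {gpt src tgt len e t} \<epsilon>)"
    if "\<tau> \<in> {0..len e}" "\<bar>\<tau> - t\<bar> < \<epsilon>/2" for \<tau>
  proof -
    have "D j \<tau> \<in> Hspace M u (gnbhd V E src tgt len {gpt src tgt len e \<tau>} (\<epsilon>/2))"
      using Suc that by simp
    moreover have "gnbhd V E src tgt len {gpt src tgt len e \<tau>} (\<epsilon>/2)
                   \<subseteq> gnbhd V E src tgt len {gpt src tgt len e t} \<epsilon>"
      using that Suc.prems by (intro gnbhd_gpt_subset[OF G e]) auto
    ultimately show ?thesis using Hspace_mono by blast
  qed
  show ?case
    using \<open>0 < \<epsilon>\<close> near
    by (intro weak_deriv_at_in_Hspace[OF U sub wd \<open>0 < len e\<close> Suc.prems(2), where \<delta> = "\<epsilon>/2"]) auto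
qed

theorem mainTheorem6:
  fixes M :: "'w measure"
    and V :: "'v set" and E :: "'e set" and src tgt :: "'e \<Rightarrow> 'v" and len :: "'e \<Rightarrow> real"
    and u :: "('v, 'e) gpoint \<Rightarrow> 'w \<Rightarrow> real" and p :: nat and S :: "('v, 'e) gpoint set"
  assumes "compact_connected_metric_graph V E src tgt len"
    and "differentiable_GRF M V E src tgt len u p"
    and "gopen V E src tgt len S"
    and "finite (gboundary V E src tgt len S)"
  shows "\<forall>s\<in>gboundary V E src tgt len S. \<forall>e\<in>incident_edges E src tgt s.
           \<forall>D. weak_deriv_family M V E src tgt len u p e D \<longrightarrow>
             (\<forall>t\<in>{0..len e}. gpt src tgt len e t = s \<longrightarrow>
               (\<forall>j\<le>p. D j t \<in> Hplus M V E src tgt len u (gboundary V E src tgt len S)))"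
proof (intro ballI allI impI)
  fix s e D t j
  assume s: "s \<in> gboundary V E src tgt len S" and e: "e \<in> incident_edges E src tgt s"
    and D: "weak_deriv_family M V E src tgt len u p e D" and t: "t \<in> {0..len e}"
    and st: "gpt src tgt len e t = s" and "j \<le> p"
  have grf: "gaussian_random_field M (gpoints V E src tgt len) u"
    using assms(2) by (simp add: differentiable_GRF_def)
  then interpret prob_space M by (simp add: gaussian_random_field_def)
  have U: "\<forall>z\<in>gpoints V E src tgt len. L2_rv M (u z)"
    using gaussian_random_field_L2[OF grf] by blast
  have "e \<in> E"
    using s e incident_edges_subset unfolding gboundary_def gclosure_def by blast
  have "D j t \<in> Hspace M u (gnbhd V E src tgt len (gboundary V E src tgt len S) \<epsilon>)" if "0 < \<epsilon>" for \<epsilon>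
    using weak_deriv_family_in_Hspace_gnbhd[OF assms(1) U \<open>e \<in> E\<close> D \<open>j \<le> p\<close> t that]
      Hspace_mono[OF gnbhd_mono] s st by blast
  then show "D j t \<in> Hplus M V E src tgt len u (gboundary V E src tgt len S)"
    unfolding Hplus_def by blast
qed

end
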